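(* Let $G$ be a finite abelian group and let $\sigma_1,\sigma_2,\tau\in G$ be non-trivial elements with $o(\tau)>2$ and $\tau\in\langle\sigma_1,\sigma_2\rangle$. Then: (1) if $\mathrm{rank}\langle\sigma_1,\sigma_2\rangle=2$, there exist characters $\phi_1,\phi_2,\chi\in G^*$ such that (i) $\chi(\tau)\neq1$; (ii) $\phi_1(\sigma_1)\neq1$, $\phi_2(\sigma_2)\neq1$ and $\phi_1(\sigma_2)=\phi_2(\sigma_1)=1$; (iii) $\phi_1(\sigma_1)\chi(\sigma_1)\neq1$ and $\phi_2(\sigma_2)\overline{\chi}(\sigma_2)\neq1$. (2) If $\mathrm{rank}\langle\sigma_1,\sigma_2\rangle=1$, there exist characters $\phi,\chi\in G^*$ such that (i) $\chi(\tau)\neq1$; (ii) $\phi(\sigma_i)\neq1$ for $i=1,2$; (iii) $\phi(\sigma_i)\chi(\sigma_i)\neq1$ for $i=1,2$.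
   Context: $G^*$ is the group of characters $G\to\mathbb{C}^*$; $o(g)$ is the order of $g$; the rank of an abelian group is the minimal number of its generators. *)

theory Defs
  imports Complex_Main "HOL-Algebra.Algebra"
begin

text \<open>A character of G: a homomorphism from G to the multiplicative group of
nonzero complex numbers (values outside the carrier are irrelevant).\<close>
definition character :: "('a, 'b) monoid_scheme \<Rightarrow> ('a \<Rightarrow> complex) \<Rightarrow> bool" where
  "character G \<chi> \<longleftrightarrow>
     (\<forall>x\<in>carrier G. \<chi> x \<noteq> 0) \<and>
     (\<forall>x\<in>carrier G. \<forall>y\<in>carrier G. \<chi> (x \<otimes>\<^bsub>G\<^esub> y) = \<chi> x * \<chi> y)"

definition group_rank :: "('a, 'b) monoid_scheme \<Rightarrow> 'a set \<Rightarrow> nat" where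
  "group_rank G H = (LEAST n. \<exists>S. S \<subseteq> H \<and> finite S \<and> card S = n \<and> generate G S = H)"

end

theory Submission
  imports Defs
begin

(* Characters of a finite abelian group extend from every subgroup K, and with a
   prescribed value at any g: if m is the order of gK in G/K, every element of the
   subgroup generated by K and g is uniquely k g^j with k in K and j < m, so psi can be
   extended by sending g to any m-th root of psi(g^m).  Hence every cyclic subgroup has
   a faithful character, and for g outside K there is a character trivial on K whose
   value at g is a nontrivial root of unity avoiding any one given number c -- unless
   gK has order 2 and c = -1.

   Rank 1: for a faithful character psi of the cyclic group generated by sigma1 and
   sigma2, take phi = psi^-1 and chi = psi^2; chi(tau) = psi(tau^2) is not 1 because
   o(tau) > 2.  Rank 2: neither sigma_i lies in the cyclic group of the other.  One first
   finds chi with chi(tau) <> 1 that is not -1 at sigma1 if sigma1^2 lies in <sigma2>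
   (and symmetrically), and then phi1 trivial on <sigma2> with phi1(sigma1) different
   from 1 and from 1/chi(sigma1), and phi2 trivial on <sigma1> with phi2(sigma2)
   different from 1 and from chi(sigma2) = 1/cnj(chi(sigma2)). *)

lemma complex_root_exists:
  fixes z :: complex
  assumes "0 < n"
  shows "\<exists>w. w ^ n = z"
proof -
  have "(rcis (root n (cmod z)) (Arg z / n)) ^ n = rcis (cmod z) (Arg z)"
    using assms by (simp add: DeMoivre2 real_root_pow_pos2)
  then show ?thesis
    by (metis rcis_cmod_Arg)
qed

lemma primitive_root_of_unity_exists:
  assumes "0 < m"
  shows "\<exists>\<zeta>::complex. \<forall>j. \<zeta> ^ j = 1 \<longleftrightarrow> m dvd j"
proof -
  define \<zeta> where "\<zeta> = cis (2 * pi / m)"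
  have pow: "\<zeta> ^ j = cis (2 * pi * real j / real m)" for j
    by (simp add: \<zeta>_def DeMoivre mult_ac)
  have inj: "inj_on (\<lambda>j. cis (2 * pi * real j / real m)) {..<m}"
    using bij_betw_roots_unity[OF assms] by (simp add: bij_betw_def)
  have \<zeta>m: "\<zeta> ^ m = 1"
    using assms by (simp add: pow)
  have "\<zeta> ^ j = 1 \<longleftrightarrow> m dvd j" for j
  proof
    have "\<zeta> ^ j = (\<zeta> ^ m) ^ (j div m) * \<zeta> ^ (j mod m)"
      by (simp flip: power_mult power_add)
    moreover assume "\<zeta> ^ j = 1"
    ultimately have "\<zeta> ^ (j mod m) = 1"
      by (simp add: \<zeta>m)
    then have "cis (2 * pi * real (j mod m) / real m) = cis (2 * pi * real 0 / real m)"
      by (simp add: pow)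
    then have "j mod m = 0"
      using inj_onD[OF inj] assms by simp
    then show "m dvd j" by auto
  qed (auto simp: \<zeta>m power_mult)
  then show ?thesis by blast
qed

lemma root_of_unity_avoiding:
  fixes c :: complex
  assumes "2 \<le> m" and "m = 2 \<Longrightarrow> c \<noteq> -1"
  shows "\<exists>w. w ^ m = 1 \<and> w \<noteq> 1 \<and> w \<noteq> c"
proof (cases "m = 2")
  case True
  then show ?thesis using assms by (intro exI[of _ "-1"]) simp
next
  case False
  obtain \<zeta> :: complex where \<zeta>: "\<And>j. \<zeta> ^ j = 1 \<longleftrightarrow> m dvd j"
    using primitive_root_of_unity_exists assms(1) by fastforce
  have roots: "\<zeta> ^ m = 1" "(\<zeta> ^ 2) ^ m = 1"
    by (simp_all add: \<zeta> flip: power_mult)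
  have nontrivial: "\<zeta> \<noteq> 1" "\<zeta> ^ 2 \<noteq> 1"
    using \<zeta>[of 1] \<zeta>[of 2] assms(1) False by (auto dest: dvd_imp_le)
  have "\<zeta> \<noteq> 0"
    using roots(1) assms(1) by (auto simp: power_0_left)
  with nontrivial(1) have "\<zeta> \<noteq> \<zeta> ^ 2"
    by (simp add: power2_eq_square)
  then show ?thesis
  proof (cases "\<zeta> = c")
    case True
    then show ?thesis using roots nontrivial \<open>\<zeta> \<noteq> \<zeta> ^ 2\<close> by (intro exI[of _ "\<zeta> ^ 2"]) simp
  qed (use roots nontrivial in blast)
qed

lemma square_root_avoiding:
  fixes z c :: complex
  assumes "z \<noteq> 1"
  shows "\<exists>w. w ^ 2 = z \<and> w \<noteq> -1 \<and> c * w \<noteq> 1"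
proof -
  obtain w where w: "w ^ 2 = z"
    using complex_root_exists[of 2] by auto
  with assms have "w \<noteq> 1" "w \<noteq> -1" by auto
  then show ?thesis
  proof (cases "c * w = 1")
    case True
    then have "c * (- w) \<noteq> 1" by simp
    with w \<open>w \<noteq> 1\<close> show ?thesis by (intro exI[of _ "-w"]) auto
  qed (use w \<open>w \<noteq> -1\<close> in blast)
qed

definition character_on :: "('a, 'b) monoid_scheme \<Rightarrow> 'a set \<Rightarrow> ('a \<Rightarrow> complex) \<Rightarrow> bool" where
  "character_on G K \<psi> \<longleftrightarrow>
     (\<forall>x\<in>K. \<psi> x \<noteq> 0) \<and> (\<forall>x\<in>K. \<forall>y\<in>K. \<psi> (x \<otimes>\<^bsub>G\<^esub> y) = \<psi> x * \<psi> y)"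

definition rel_ord :: "('a, 'b) monoid_scheme \<Rightarrow> 'a set \<Rightarrow> 'a \<Rightarrow> nat" where
  "rel_ord G K g = (LEAST j. 0 < j \<and> g [^]\<^bsub>G\<^esub> j \<in> K)"

definition adjoin :: "('a, 'b) monoid_scheme \<Rightarrow> 'a set \<Rightarrow> 'a \<Rightarrow> 'a set" where
  "adjoin G K g = {k \<otimes>\<^bsub>G\<^esub> g [^]\<^bsub>G\<^esub> j | k j. k \<in> K \<and> j < rel_ord G K g}"

text \<open>The description is unique on \<open>adjoin G K g\<close>, by \<open>adjoin_repr_unique\<close> below;
  elsewhere the value is irrelevant.\<close>
definition adjoin_extension ::
    "('a, 'b) monoid_scheme \<Rightarrow> 'a set \<Rightarrow> 'a \<Rightarrow> ('a \<Rightarrow> complex) \<Rightarrow> complex \<Rightarrow> 'a \<Rightarrow> complex"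
  where "adjoin_extension G K g \<psi> w x =
    (THE v. \<exists>k j. k \<in> K \<and> j < rel_ord G K g \<and> x = k \<otimes>\<^bsub>G\<^esub> g [^]\<^bsub>G\<^esub> j \<and> v = \<psi> k * w ^ j)"

lemma character_iff_character_on_carrier: "character G \<chi> \<longleftrightarrow> character_on G (carrier G) \<chi>"
  by (simp add: character_def character_on_def)

context group
begin

lemma character_on_one:
  assumes "subgroup K G" and "character_on G K \<psi>"
  shows "\<psi> \<one> = 1"
proof -
  have "\<one> \<in> K" using assms(1) by (rule subgroup.one_closed)
  with assms(2) have "\<psi> (\<one> \<otimes> \<one>) = \<psi> \<one> * \<psi> \<one>" and "\<psi> \<one> \<noteq> 0"
    unfolding character_on_def by blast+
  then show ?thesis by simp
qed

lemma character_one: "character G \<chi> \<Longrightarrow> \<chi> \<one> = 1"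
  using character_on_one subgroup_self by (simp add: character_iff_character_on_carrier)

lemma character_mult:
  "character G \<chi> \<Longrightarrow> x \<in> carrier G \<Longrightarrow> y \<in> carrier G \<Longrightarrow> \<chi> (x \<otimes> y) = \<chi> x * \<chi> y"
  by (simp add: character_def)

lemma character_nonzero: "character G \<chi> \<Longrightarrow> x \<in> carrier G \<Longrightarrow> \<chi> x \<noteq> 0"
  by (simp add: character_def)

lemma character_pow: "character G \<chi> \<Longrightarrow> x \<in> carrier G \<Longrightarrow> \<chi> (x [^] (n::nat)) = \<chi> x ^ n"
  by (induction n) (simp_all add: character_one character_mult mult.commute)

lemma character_inverse: "character G \<chi> \<Longrightarrow> character G (\<lambda>x. inverse (\<chi> x))"
  by (simp add: character_def)

lemma character_times: "character G \<chi> \<Longrightarrow> character G \<psi> \<Longrightarrow> character G (\<lambda>x. \<chi> x * \<psi> x)"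
  by (simp add: character_def)

lemma norm_character:
  assumes "finite (carrier G)" and \<chi>: "character G \<chi>" and x: "x \<in> carrier G"
  shows "norm (\<chi> x) = 1"
proof -
  have "norm (\<chi> x) ^ ord x = 1"
    by (metis character_pow[OF \<chi> x] pow_ord_eq_1[OF x] character_one[OF \<chi>] norm_one norm_power)
  moreover have "0 < ord x" using ord_ge_1[OF assms(1) x] by simp
  ultimately show ?thesis
    using power_eq_imp_eq_base[of "norm (\<chi> x)" "ord x" 1] by simp
qed

lemma cnj_character:
  assumes "finite (carrier G)" and \<chi>: "character G \<chi>" and x: "x \<in> carrier G"
  shows "cnj (\<chi> x) = inverse (\<chi> x)"
  using complex_norm_square[of "\<chi> x"] norm_character[OF assms] character_nonzero[OF \<chi> x]
  by (simp add: field_simps)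

lemma character_imp_character_on: "character G \<chi> \<Longrightarrow> K \<subseteq> carrier G \<Longrightarrow> character_on G K \<chi>"
  by (auto simp: character_def character_on_def)

lemma faithful_character_ne_minus_one:
  assumes \<chi>: "character G \<chi>" and faithful: "\<forall>y\<in>K. \<chi> y = 1 \<longrightarrow> y = \<one>"
    and x: "x \<in> carrier G" and "x \<otimes> x \<in> K" and "x \<otimes> x \<noteq> \<one>"
  shows "\<chi> x \<noteq> -1"
proof
  assume "\<chi> x = -1"
  then have "\<chi> (x \<otimes> x) = 1"
    using character_mult[OF \<chi> x x] by simp
  with faithful assms(4) have "x \<otimes> x = \<one>"
    by blast
  with assms(5) show False
    by simp
qed

lemma square_ne_one_if_ord_gt_2:
  assumes x: "x \<in> carrier G" and "2 < ord x"
  shows "x \<otimes> x \<noteq> \<one>"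
proof
  assume "x \<otimes> x = \<one>"
  then have "x [^] (2::nat) = \<one>"
    using x by (simp add: numeral_2_eq_2)
  then have "ord x dvd 2"
    using pow_eq_id[OF x, of 2] by blast
  with assms(2) show False
    by (auto dest: dvd_imp_le)
qed

lemma square_in_generate: "a \<in> carrier G \<Longrightarrow> a \<otimes> a \<in> generate G {a}"
  by (simp add: generate.eng generate.incl)

lemma generate_order_two:
  assumes b: "b \<in> carrier G" and "b \<otimes> b = \<one>"
  shows "generate G {b} \<subseteq> {\<one>, b}"
proof -
  have "inv b = b"
    using assms inv_equality by blast
  then have "subgroup {\<one>, b} G"
    using assms by (intro subgroupI) auto
  then show ?thesis
    by (rule generate_subgroup_incl[rotated]) simp
qed

lemma mult_pow_split:
  assumes "k \<in> carrier G" and "g \<in> carrier G" and "m \<le> (n::nat)"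
  shows "k \<otimes> g [^] n = (k \<otimes> g [^] m) \<otimes> g [^] (n - m)"
  using assms by (simp add: m_assoc nat_pow_mult)

context
  fixes K g
  assumes finite_carrier: "finite (carrier G)" and K: "subgroup K G" and g: "g \<in> carrier G"
begin

lemma rel_ord_exists: "0 < rel_ord G K g \<and> g [^] rel_ord G K g \<in> K"
proof -
  have "0 < ord g \<and> g [^] ord g \<in> K"
    using ord_ge_1[OF finite_carrier g] pow_ord_eq_1[OF g] subgroup.one_closed[OF K] by simp
  then show ?thesis
    unfolding rel_ord_def by (rule LeastI)
qed

lemma rel_ord_pos: "0 < rel_ord G K g"
  using rel_ord_exists by blast

lemma pow_rel_ord_mem: "g [^] rel_ord G K g \<in> K"
  using rel_ord_exists by blast

lemma pow_notin_below_rel_ord: "0 < j \<Longrightarrow> j < rel_ord G K g \<Longrightarrow> g [^] j \<notin> K"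
  unfolding rel_ord_def using not_less_Least by blast

lemma rel_ord_le: "0 < j \<Longrightarrow> g [^] j \<in> K \<Longrightarrow> rel_ord G K g \<le> j"
  unfolding rel_ord_def by (rule Least_le) simp

lemma rel_ord_eq_1_iff: "rel_ord G K g = 1 \<longleftrightarrow> g \<in> K"
  using rel_ord_pos rel_ord_le[of 1] pow_rel_ord_mem g by fastforce

lemma rel_ord_eq_2:
  assumes "g \<notin> K" and "g \<otimes> g \<in> K"
  shows "rel_ord G K g = 2"
proof -
  have "rel_ord G K g \<le> 2"
    using rel_ord_le[of 2] assms(2) g by (simp add: numeral_2_eq_2)
  then show ?thesis
    using rel_ord_pos rel_ord_eq_1_iff assms(1) by linarith
qed

end

end

context comm_group
begin

lemma square_eq_one_on_generate:
  assumes "S \<subseteq> carrier G" and "\<forall>s\<in>S. s \<otimes> s = \<one>" and "x \<in> generate G S"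
  shows "x \<otimes> x = \<one>"
proof -
  let ?I = "{y \<in> carrier G. y \<otimes> y = \<one>}"
  have "subgroup ?I G"
  proof (rule subgroupI)
    fix a b assume "a \<in> ?I" "b \<in> ?I"
    moreover have "(a \<otimes> b) \<otimes> (a \<otimes> b) = (a \<otimes> a) \<otimes> (b \<otimes> b)" if "a \<in> carrier G" "b \<in> carrier G"
      using that by (simp add: m_ac)
    ultimately show "a \<otimes> b \<in> ?I"
      by simp
  next
    fix a assume "a \<in> ?I"
    then show "inv a \<in> ?I"
      using inv_equality[of a a] by simp
  qed auto
  then have "generate G S \<subseteq> ?I"
    using assms(1,2) by (intro generate_subgroup_incl) auto
  with assms(3) show ?thesis
    by blast
qed

text \<open>If \<open>b\<^sup>2 = 1\<close>, then \<open>a\<^sup>2 \<in> {1, b}\<close> forces \<open>a\<^sup>2 = 1\<close>, and every element of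
  \<open>\<langle>a, b\<rangle>\<close> would be an involution.\<close>
lemma square_ne_one_if_square_in_other:
  assumes a: "a \<in> carrier G" and b: "b \<in> carrier G" and "b \<notin> generate G {a}"
    and "a \<otimes> a \<in> generate G {b}" and "\<tau> \<in> generate G {a, b}" and "\<tau> \<otimes> \<tau> \<noteq> \<one>"
  shows "b \<otimes> b \<noteq> \<one>"
proof
  assume bb: "b \<otimes> b = \<one>"
  then have "a \<otimes> a \<in> {\<one>, b}"
    using generate_order_two[OF b] assms(4) by blast
  moreover have "a \<otimes> a \<noteq> b"
    using assms(3) square_in_generate[OF a] by auto
  ultimately have "a \<otimes> a = \<one>"
    by simp
  with bb a b assms(5,6) show False
    using square_eq_one_on_generate[of "{a, b}" \<tau>] by auto
qed

end

locale finite_comm_group = comm_group +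
  assumes finite_carrier: "finite (carrier G)"
begin

lemma mult_pow_mult_mult_pow:
  assumes "k \<in> carrier G" and "k' \<in> carrier G" and "g \<in> carrier G"
  shows "(k \<otimes> g [^] i) \<otimes> (k' \<otimes> g [^] j) = (k \<otimes> k') \<otimes> g [^] (i + j :: nat)"
  using assms by (simp add: m_ac flip: nat_pow_mult)

context
  fixes K g
  assumes K: "subgroup K G" and g: "g \<in> carrier G"
begin

lemma adjoin_repr_unique:
  assumes "k1 \<in> K" and "k2 \<in> K" and "(i::nat) < rel_ord G K g" and "j < rel_ord G K g"
    and "k1 \<otimes> g [^] i = k2 \<otimes> g [^] j"
  shows "i = j \<and> k1 = k2"
proof -
  have *: "i = j \<and> k1 = k2"
    if "(i::nat) \<le> j" and "k1 \<in> K" and "k2 \<in> K" and "j < rel_ord G K g"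
      and "k1 \<otimes> g [^] i = k2 \<otimes> g [^] j" for i j k1 k2
  proof -
    have k: "k1 \<in> carrier G" "k2 \<in> carrier G"
      using that(2,3) K by (auto simp: subgroup.mem_carrier)
    have "k1 \<otimes> g [^] i = (k2 \<otimes> g [^] (j - i)) \<otimes> g [^] i"
      using that(1,5) k g by (simp add: m_assoc nat_pow_mult)
    then have k1: "k1 = k2 \<otimes> g [^] (j - i)"
      using k g by simp
    then have "g [^] (j - i) = inv k2 \<otimes> k1"
      using k g by (simp flip: m_assoc)
    then have "g [^] (j - i) \<in> K"
      using that(2,3) K by (simp add: subgroup.m_closed subgroup.m_inv_closed)
    then have "i = j"
      using pow_notin_below_rel_ord[OF finite_carrier K g, of "j - i"] that(1,4) by fastforce
    with k1 k show ?thesis by simp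
  qed
  show ?thesis
    using *[of i j k1 k2] *[of j i k2 k1] assms by (cases "i \<le> j") auto
qed

lemma mult_pow_mem_adjoin: "k \<in> K \<Longrightarrow> k \<otimes> g [^] (n::nat) \<in> adjoin G K g"
proof (induction n arbitrary: k rule: less_induct)
  case (less n)
  let ?m = "rel_ord G K g"
  show ?case
  proof (cases "n < ?m")
    case True
    then show ?thesis using less.prems unfolding adjoin_def by blast
  next
    case False
    have "k \<otimes> g [^] n = (k \<otimes> g [^] ?m) \<otimes> g [^] (n - ?m)"
      using False less.prems K g by (intro mult_pow_split) (auto simp: subgroup.mem_carrier)
    moreover have "k \<otimes> g [^] ?m \<in> K"
      using K less.prems pow_rel_ord_mem[OF finite_carrier K g] by (rule subgroup.m_closed)
    moreover have "n - ?m < n"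
      using False rel_ord_pos[OF finite_carrier K g] by simp
    ultimately show ?thesis using less.IH by metis
  qed
qed

lemma subset_adjoin: "K \<subseteq> adjoin G K g"
  using mult_pow_mem_adjoin[of _ 0] K by (auto simp: subgroup.mem_carrier)

lemma mem_adjoin: "g \<in> adjoin G K g"
  using mult_pow_mem_adjoin[of \<one> 1] K g by (simp add: subgroup.one_closed)

lemma subgroup_adjoin: "subgroup (adjoin G K g) G"
proof (rule subgroupI)
  show "adjoin G K g \<subseteq> carrier G"
    using K g by (auto simp: adjoin_def subgroup.mem_carrier)
  show "adjoin G K g \<noteq> {}"
    using mem_adjoin by blast
next
  fix a assume "a \<in> adjoin G K g"
  then obtain k j where a: "a = k \<otimes> g [^] j" "k \<in> K" "j < rel_ord G K g"
    unfolding adjoin_def by blast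
  let ?m = "rel_ord G K g"
  have k: "k \<in> carrier G" using a(2) K by (simp add: subgroup.mem_carrier)
  have "g [^] ?m = g [^] j \<otimes> g [^] (?m - j)"
    using a(3) g by (simp add: nat_pow_mult)
  then have "inv a = (inv k \<otimes> inv (g [^] ?m)) \<otimes> g [^] (?m - j)"
    using a(1) k g by (simp add: inv_mult_group m_ac)
  moreover have "inv k \<otimes> inv (g [^] ?m) \<in> K"
    using K a(2) pow_rel_ord_mem[OF finite_carrier K g]
    by (simp add: subgroup.m_closed subgroup.m_inv_closed)
  ultimately show "inv a \<in> adjoin G K g"
    by (simp add: mult_pow_mem_adjoin)
next
  fix a b assume "a \<in> adjoin G K g" "b \<in> adjoin G K g"
  then obtain k k' and i j :: nat
    where "a = k \<otimes> g [^] i" "k \<in> K" "b = k' \<otimes> g [^] j" "k' \<in> K"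
    unfolding adjoin_def by blast
  then show "a \<otimes> b \<in> adjoin G K g"
    using K g by (simp add: mult_pow_mult_mult_pow subgroup.mem_carrier subgroup.m_closed
        mult_pow_mem_adjoin)
qed

lemma adjoin_extension_repr:
  assumes k: "k \<in> K" and j: "j < rel_ord G K g"
  shows "adjoin_extension G K g \<psi> w (k \<otimes> g [^] j) = \<psi> k * w ^ j"
  unfolding adjoin_extension_def
proof (rule the_equality)
  fix v
  assume "\<exists>k' j'. k' \<in> K \<and> j' < rel_ord G K g \<and> k \<otimes> g [^] j = k' \<otimes> g [^] j' \<and> v = \<psi> k' * w ^ j'"
  then obtain k' j' where "k' \<in> K" "j' < rel_ord G K g" "k \<otimes> g [^] j = k' \<otimes> g [^] j'"
    and "v = \<psi> k' * w ^ j'"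
    by blast
  with adjoin_repr_unique[OF k \<open>k' \<in> K\<close> j \<open>j' < rel_ord G K g\<close>] show "v = \<psi> k * w ^ j"
    by simp
qed (use k j in blast)

lemma adjoin_extension_mult_pow:
  assumes \<psi>: "character_on G K \<psi>" and w: "w ^ rel_ord G K g = \<psi> (g [^] rel_ord G K g)"
    and "k \<in> K"
  shows "adjoin_extension G K g \<psi> w (k \<otimes> g [^] n) = \<psi> k * w ^ n"
  using assms(3)
proof (induction n arbitrary: k rule: less_induct)
  case (less n)
  let ?m = "rel_ord G K g"
  show ?case
  proof (cases "n < ?m")
    case True
    then show ?thesis using adjoin_extension_repr less.prems by blast
  next
    case False
    have gm: "g [^] ?m \<in> K"
      using pow_rel_ord_mem[OF finite_carrier K g] .
    have "k \<otimes> g [^] n = (k \<otimes> g [^] ?m) \<otimes> g [^] (n - ?m)"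
      using False less.prems K g by (intro mult_pow_split) (auto simp: subgroup.mem_carrier)
    also have "adjoin_extension G K g \<psi> w \<dots> = \<psi> (k \<otimes> g [^] ?m) * w ^ (n - ?m)"
      using less.IH[of "n - ?m"] False rel_ord_pos[OF finite_carrier K g] K gm less.prems
      by (simp add: subgroup.m_closed)
    also have "\<dots> = \<psi> k * w ^ (?m + (n - ?m))"
      using \<psi> less.prems gm w by (simp add: character_on_def power_add)
    finally show ?thesis
      using False by simp
  qed
qed

lemma character_on_adjoin:
  assumes \<psi>: "character_on G K \<psi>" and w: "w ^ rel_ord G K g = \<psi> (g [^] rel_ord G K g)"
  shows "character_on G (adjoin G K g) (adjoin_extension G K g \<psi> w)"
    and "\<forall>k\<in>K. adjoin_extension G K g \<psi> w k = \<psi> k"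
    and "adjoin_extension G K g \<psi> w g = w"
proof -
  note formula = adjoin_extension_mult_pow[OF \<psi> w]
  show "character_on G (adjoin G K g) (adjoin_extension G K g \<psi> w)"
    unfolding character_on_def
  proof (intro conjI ballI)
    fix x assume "x \<in> adjoin G K g"
    then obtain k and j :: nat where "x = k \<otimes> g [^] j" "k \<in> K"
      unfolding adjoin_def by blast
    moreover have "w \<noteq> 0"
      using w \<psi> pow_rel_ord_mem[OF finite_carrier K g] rel_ord_pos[OF finite_carrier K g]
      by (auto simp: character_on_def power_0_left)
    ultimately show "adjoin_extension G K g \<psi> w x \<noteq> 0"
      using \<psi> formula by (simp add: character_on_def)
  next
    fix x y assume "x \<in> adjoin G K g" "y \<in> adjoin G K g"
    then obtain k k' and i j :: nat
      where "x = k \<otimes> g [^] i" "k \<in> K" "y = k' \<otimes> g [^] j" "k' \<in> K"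
      unfolding adjoin_def by blast
    then show "adjoin_extension G K g \<psi> w (x \<otimes> y)
        = adjoin_extension G K g \<psi> w x * adjoin_extension G K g \<psi> w y"
      using K g \<psi> formula
      by (simp add: mult_pow_mult_mult_pow subgroup.mem_carrier subgroup.m_closed power_add
          character_on_def)
  qed
  show "\<forall>k\<in>K. adjoin_extension G K g \<psi> w k = \<psi> k"
    using formula[of _ 0] K by (simp add: subgroup.mem_carrier)
  show "adjoin_extension G K g \<psi> w g = w"
    using formula[of \<one> 1] K g character_on_one[OF K \<psi>] by (simp add: subgroup.one_closed)
qed

end

lemma extend_character_on:
  assumes "subgroup K G" and "character_on G K \<psi>"
  shows "\<exists>\<chi>. character G \<chi> \<and> (\<forall>k\<in>K. \<chi> k = \<psi> k)"
  using assms
proof (induction "card (carrier G - K)" arbitrary: K \<psi> rule: less_induct)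
  case less
  show ?case
  proof (cases "K = carrier G")
    case True
    then show ?thesis
      using less.prems(2) by (auto simp: character_iff_character_on_carrier)
  next
    case False
    then obtain g where g: "g \<in> carrier G" "g \<notin> K"
      using subgroup.subset[OF less.prems(1)] by blast
    obtain w where "w ^ rel_ord G K g = \<psi> (g [^] rel_ord G K g)"
      using complex_root_exists rel_ord_pos[OF finite_carrier less.prems(1) g(1)] by blast
    note ext = character_on_adjoin[OF less.prems(1) g(1) less.prems(2) this]
    have "card (carrier G - adjoin G K g) < card (carrier G - K)"
      using subset_adjoin[OF less.prems(1) g(1)] mem_adjoin[OF less.prems(1) g(1)] g
        subgroup.subset[OF subgroup_adjoin[OF less.prems(1) g(1)]] finite_carrier
      by (intro psubset_card_mono) auto
    then obtain \<chi> where \<chi>: "character G \<chi>"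
      "\<forall>x\<in>adjoin G K g. \<chi> x = adjoin_extension G K g \<psi> w x"
      using less.hyps subgroup_adjoin[OF less.prems(1) g(1)] ext(1) by blast
    then show ?thesis
      using ext(2) subset_adjoin[OF less.prems(1) g(1)] by (intro exI[of _ \<chi>]) auto
  qed
qed

lemma extend_character_on_with_value:
  assumes K: "subgroup K G" and \<psi>: "character_on G K \<psi>" and g: "g \<in> carrier G"
    and w: "w ^ rel_ord G K g = \<psi> (g [^] rel_ord G K g)"
  shows "\<exists>\<chi>. character G \<chi> \<and> (\<forall>k\<in>K. \<chi> k = \<psi> k) \<and> \<chi> g = w"
proof -
  note ext = character_on_adjoin[OF K g \<psi> w]
  obtain \<chi> where \<chi>: "character G \<chi>" "\<forall>x\<in>adjoin G K g. \<chi> x = adjoin_extension G K g \<psi> w x"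
    using extend_character_on[OF subgroup_adjoin[OF K g] ext(1)] by blast
  have "\<forall>k\<in>K. \<chi> k = \<psi> k"
    using \<chi>(2) ext(2) subset_adjoin[OF K g] by auto
  moreover have "\<chi> g = w"
    using \<chi>(2) ext(3) mem_adjoin[OF K g] by simp
  ultimately show ?thesis
    using \<chi>(1) by blast
qed

lemma extend_trivial_character_with_value:
  assumes "subgroup K G" and "g \<in> carrier G" and "w ^ rel_ord G K g = 1"
  shows "\<exists>\<chi>. character G \<chi> \<and> (\<forall>k\<in>K. \<chi> k = 1) \<and> \<chi> g = w"
  using extend_character_on_with_value[of K "\<lambda>_. 1" g w] assms by (simp add: character_on_def)

lemma faithful_character_on_cyclic:
  assumes g: "g \<in> carrier G"
  shows "\<exists>\<chi>. character G \<chi> \<and> (\<forall>x\<in>generate G {g}. \<chi> x = 1 \<longrightarrow> x = \<one>)"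
proof -
  let ?m = "rel_ord G {\<one>} g"
  obtain \<zeta> :: complex where \<zeta>: "\<forall>j. \<zeta> ^ j = 1 \<longleftrightarrow> ?m dvd j"
    using primitive_root_of_unity_exists[OF rel_ord_pos[OF finite_carrier triv_subgroup g]] by blast
  then have "\<zeta> ^ ?m = 1"
    by simp
  then obtain \<chi> where \<chi>: "character G \<chi>" "\<chi> g = \<zeta>"
    using extend_trivial_character_with_value[OF triv_subgroup g] by blast
  have "x = \<one>" if x_gen: "x \<in> generate G {g}" and x_ker: "\<chi> x = 1" for x
  proof -
    obtain n :: nat where x: "x = g [^] n"
      using x_gen generate_pow_on_finite_carrier[OF finite_carrier g] by auto
    with x_ker \<chi> g have "\<zeta> ^ n = 1"
      by (simp add: character_pow)
    with \<zeta> obtain q where "n = ?m * q"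
      by (auto elim: dvdE)
    then have "x = (g [^] ?m) [^] q"
      using x nat_pow_pow[OF g] by simp
    then show ?thesis
      using pow_rel_ord_mem[OF finite_carrier triv_subgroup g] by simp
  qed
  with \<chi> show ?thesis by blast
qed

lemma annihilating_character_avoiding:
  assumes K: "subgroup K G" and g: "g \<in> carrier G" "g \<notin> K"
    and c: "g \<otimes> g \<in> K \<Longrightarrow> c \<noteq> -1"
  shows "\<exists>\<phi>. character G \<phi> \<and> (\<forall>x\<in>K. \<phi> x = 1) \<and> \<phi> g \<noteq> 1 \<and> \<phi> g \<noteq> c"
proof -
  let ?m = "rel_ord G K g"
  have "?m \<noteq> 1"
    using rel_ord_eq_1_iff[OF finite_carrier K g(1)] g(2) by simp
  then have "2 \<le> ?m"
    using rel_ord_pos[OF finite_carrier K g(1)] by linarith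
  moreover have "?m = 2 \<Longrightarrow> c \<noteq> -1"
    using pow_rel_ord_mem[OF finite_carrier K g(1)] c g(1) by (simp add: numeral_2_eq_2)
  ultimately obtain w where "w ^ ?m = 1" "w \<noteq> 1" "w \<noteq> c"
    using root_of_unity_avoiding by blast
  moreover obtain \<phi> where "character G \<phi>" "\<forall>x\<in>K. \<phi> x = 1" "\<phi> g = w"
    using extend_trivial_character_with_value[OF K g(1) \<open>w ^ ?m = 1\<close>] by blast
  ultimately show ?thesis
    by blast
qed

lemma character_moving_not_minus_one:
  assumes \<tau>: "\<tau> \<in> carrier G" "\<tau> \<otimes> \<tau> \<noteq> \<one>" and a: "a \<in> carrier G"
  shows "\<exists>\<chi>. character G \<chi> \<and> \<chi> \<tau> \<noteq> 1 \<and> \<chi> a \<noteq> -1"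
proof (cases "\<tau> \<in> generate G {a}")
  case True
  obtain \<chi> where \<chi>: "character G \<chi>" "\<forall>x\<in>generate G {a}. \<chi> x = 1 \<longrightarrow> x = \<one>"
    using faithful_character_on_cyclic[OF a] by blast
  have "a \<otimes> a \<noteq> \<one>"
    using square_eq_one_on_generate[of "{a}" \<tau>] True \<tau> a by auto
  then have "\<chi> a \<noteq> -1"
    using faithful_character_ne_minus_one[OF \<chi> a square_in_generate[OF a]] by simp
  moreover have "\<chi> \<tau> \<noteq> 1"
    using \<chi>(2) True \<tau> by auto
  ultimately show ?thesis
    using \<chi>(1) by blast
next
  case False
  then obtain \<chi> where "character G \<chi>" "\<forall>x\<in>generate G {a}. \<chi> x = 1" "\<chi> \<tau> \<noteq> 1"
    using annihilating_character_avoiding[OF generate_is_subgroup \<tau>(1), of "{a}" 0] a by auto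
  then show ?thesis
    using a generate.incl[of a "{a}"] by force
qed

lemma mem_generate_pair_cases:
  assumes a: "a \<in> carrier G" and b: "b \<in> carrier G"
    and "a \<notin> generate G {b}" and "a \<otimes> a \<in> generate G {b}" and "x \<in> generate G {a, b}"
  obtains k where "k \<in> generate G {b}" and "x = k \<or> x = k \<otimes> a"
proof -
  let ?B = "generate G {b}"
  have B: "subgroup ?B G"
    using b by (simp add: generate_is_subgroup)
  have "generate G {a, b} \<subseteq> adjoin G ?B a"
    using subgroup_adjoin[OF B a] mem_adjoin[OF B a] subset_adjoin[OF B a] generate.incl[of b "{b}"]
    by (intro generate_subgroup_incl) auto
  with assms(5) obtain k and j :: nat where "x = k \<otimes> a [^] j" "k \<in> ?B" "j < 2"
    using rel_ord_eq_2[OF finite_carrier B a assms(3,4)] unfolding adjoin_def by auto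
  moreover from this have "j = 0 \<or> j = 1"
    by linarith
  ultimately show thesis
    using that a B by (auto simp: subgroup.mem_carrier)
qed

text \<open>Here \<open>\<langle>a, b\<rangle> = \<langle>b\<rangle> \<union> a\<langle>b\<rangle>\<close>: a faithful character of \<open>\<langle>b\<rangle>\<close> is extended
  by a square root of its value at \<open>a\<^sup>2\<close>, with the sign chosen so that \<open>\<tau>\<close> is moved.\<close>
lemma character_moving_not_minus_one_pair:
  assumes a: "a \<in> carrier G" and b: "b \<in> carrier G"
    and \<tau>: "\<tau> \<in> generate G {a, b}" "\<tau> \<otimes> \<tau> \<noteq> \<one>"
    and ab: "a \<notin> generate G {b}" "b \<notin> generate G {a}"
    and squares: "a \<otimes> a \<in> generate G {b}" "b \<otimes> b \<in> generate G {a}"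
  shows "\<exists>\<chi>. character G \<chi> \<and> \<chi> \<tau> \<noteq> 1 \<and> \<chi> a \<noteq> -1 \<and> \<chi> b \<noteq> -1"
proof -
  define B where "B = generate G {b}"
  have B: "subgroup B G"
    using b by (simp add: B_def generate_is_subgroup)
  have aa: "a \<otimes> a \<noteq> \<one>"
    using square_ne_one_if_square_in_other[OF b a ab(1) squares(2)] \<tau> by (simp add: insert_commute)
  have bb: "b \<otimes> b \<noteq> \<one>"
    using square_ne_one_if_square_in_other[OF a b ab(2) squares(1) \<tau>] .
  obtain \<chi>\<^sub>0 where \<chi>\<^sub>0: "character G \<chi>\<^sub>0" "\<forall>x\<in>B. \<chi>\<^sub>0 x = 1 \<longrightarrow> x = \<one>"
    using faithful_character_on_cyclic[OF b] unfolding B_def by blast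
  obtain k where k: "k \<in> B" "\<tau> = k \<or> \<tau> = k \<otimes> a"
    using mem_generate_pair_cases[OF a b ab(1) squares(1) \<tau>(1)] unfolding B_def .
  have "\<chi>\<^sub>0 (a \<otimes> a) \<noteq> 1"
    using \<chi>\<^sub>0(2) squares(1) aa by (auto simp: B_def)
  then obtain w where w: "w ^ 2 = \<chi>\<^sub>0 (a \<otimes> a)" "w \<noteq> -1" "\<chi>\<^sub>0 k * w \<noteq> 1"
    using square_root_avoiding by blast
  then obtain \<chi> where \<chi>: "character G \<chi>" "\<forall>x\<in>B. \<chi> x = \<chi>\<^sub>0 x" "\<chi> a = w"
    using extend_character_on_with_value[OF B character_imp_character_on[OF \<chi>\<^sub>0(1)] a]
      rel_ord_eq_2[OF finite_carrier B a] ab(1) squares(1) subgroup.subset[OF B] a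
    by (auto simp: B_def numeral_2_eq_2)
  from k(2) have "\<chi> \<tau> \<noteq> 1"
  proof
    assume "\<tau> = k"
    moreover have "\<tau> \<noteq> \<one>"
      using \<tau>(2) by auto
    ultimately show ?thesis
      using \<chi>(2) \<chi>\<^sub>0(2) k(1) by auto
  next
    assume "\<tau> = k \<otimes> a"
    then show ?thesis
      using character_mult[OF \<chi>(1)] \<chi>(2,3) w(3) k(1) B a by (simp add: subgroup.mem_carrier)
  qed
  moreover have "\<chi> b \<noteq> -1"
    using faithful_character_ne_minus_one[OF \<chi>\<^sub>0 b _ bb] \<chi>(2) square_in_generate[OF b]
    by (simp add: B_def generate.incl)
  ultimately show ?thesis
    using \<chi>(1,3) w(2) by blast
qed

lemma character_moving_avoiding_minus_one:
  assumes a: "a \<in> carrier G" and b: "b \<in> carrier G"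
    and \<tau>: "\<tau> \<in> generate G {a, b}" "\<tau> \<otimes> \<tau> \<noteq> \<one>"
    and ab: "a \<notin> generate G {b}" "b \<notin> generate G {a}"
  shows "\<exists>\<chi>. character G \<chi> \<and> \<chi> \<tau> \<noteq> 1 \<and>
           (a \<otimes> a \<in> generate G {b} \<longrightarrow> \<chi> a \<noteq> -1) \<and> (b \<otimes> b \<in> generate G {a} \<longrightarrow> \<chi> b \<noteq> -1)"
proof -
  have "\<tau> \<in> carrier G"
    using \<tau>(1) generate_incl[of "{a, b}"] a b by blast
  consider "a \<otimes> a \<notin> generate G {b}" | "b \<otimes> b \<notin> generate G {a}"
    | "a \<otimes> a \<in> generate G {b}" "b \<otimes> b \<in> generate G {a}"
    by blast
  then show ?thesis
  proof cases
    case 1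
    then show ?thesis
      using character_moving_not_minus_one[OF \<open>\<tau> \<in> carrier G\<close> \<tau>(2) b] by blast
  next
    case 2
    then show ?thesis
      using character_moving_not_minus_one[OF \<open>\<tau> \<in> carrier G\<close> \<tau>(2) a] by blast
  next
    case 3
    then show ?thesis
      using character_moving_not_minus_one_pair[OF a b \<tau> ab] by blast
  qed
qed

lemma characters_for_independent_pair:
  assumes \<sigma>1: "\<sigma>1 \<in> carrier G" and \<sigma>2: "\<sigma>2 \<in> carrier G"
    and \<tau>: "\<tau> \<in> generate G {\<sigma>1, \<sigma>2}" "\<tau> \<otimes> \<tau> \<noteq> \<one>"
    and independent: "\<sigma>1 \<notin> generate G {\<sigma>2}" "\<sigma>2 \<notin> generate G {\<sigma>1}"
  shows "\<exists>\<phi>1 \<phi>2 \<chi>. character G \<phi>1 \<and> character G \<phi>2 \<and> character G \<chi> \<and>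
           \<chi> \<tau> \<noteq> 1 \<and>
           \<phi>1 \<sigma>1 \<noteq> 1 \<and> \<phi>2 \<sigma>2 \<noteq> 1 \<and> \<phi>1 \<sigma>2 = 1 \<and> \<phi>2 \<sigma>1 = 1 \<and>
           \<phi>1 \<sigma>1 * \<chi> \<sigma>1 \<noteq> 1 \<and> \<phi>2 \<sigma>2 * cnj (\<chi> \<sigma>2) \<noteq> 1"
proof -
  obtain \<chi> where \<chi>: "character G \<chi>" "\<chi> \<tau> \<noteq> 1"
    "\<sigma>1 \<otimes> \<sigma>1 \<in> generate G {\<sigma>2} \<longrightarrow> \<chi> \<sigma>1 \<noteq> -1"
    "\<sigma>2 \<otimes> \<sigma>2 \<in> generate G {\<sigma>1} \<longrightarrow> \<chi> \<sigma>2 \<noteq> -1"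
    using character_moving_avoiding_minus_one[OF \<sigma>1 \<sigma>2 \<tau> independent] by blast
  have nonzero: "\<chi> \<sigma>1 \<noteq> 0" "\<chi> \<sigma>2 \<noteq> 0"
    using character_nonzero[OF \<chi>(1)] \<sigma>1 \<sigma>2 by auto
  have "\<sigma>1 \<otimes> \<sigma>1 \<in> generate G {\<sigma>2} \<Longrightarrow> inverse (\<chi> \<sigma>1) \<noteq> -1"
    using \<chi>(3) by (metis inverse_inverse_eq inverse_minus_eq inverse_1)
  then obtain \<phi>1 where \<phi>1: "character G \<phi>1" "\<forall>x\<in>generate G {\<sigma>2}. \<phi>1 x = 1"
    "\<phi>1 \<sigma>1 \<noteq> 1" "\<phi>1 \<sigma>1 \<noteq> inverse (\<chi> \<sigma>1)"
    using annihilating_character_avoiding[OF generate_is_subgroup \<sigma>1 independent(1)] \<sigma>2 by blast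
  obtain \<phi>2 where \<phi>2: "character G \<phi>2" "\<forall>x\<in>generate G {\<sigma>1}. \<phi>2 x = 1"
    "\<phi>2 \<sigma>2 \<noteq> 1" "\<phi>2 \<sigma>2 \<noteq> \<chi> \<sigma>2"
    using annihilating_character_avoiding[OF generate_is_subgroup \<sigma>2 independent(2)] \<chi>(4) \<sigma>1
    by blast
  have "\<phi>1 \<sigma>1 * \<chi> \<sigma>1 \<noteq> 1"
    using \<phi>1(4) nonzero(1) by (auto simp: field_simps)
  moreover have "\<phi>2 \<sigma>2 * cnj (\<chi> \<sigma>2) \<noteq> 1"
    unfolding cnj_character[OF finite_carrier \<chi>(1) \<sigma>2] using \<phi>2(4) nonzero(2)
    by (simp add: field_simps)
  moreover have "\<phi>1 \<sigma>2 = 1" "\<phi>2 \<sigma>1 = 1"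
    using \<phi>1(2) \<phi>2(2) generate.incl[of \<sigma>1 "{\<sigma>1}"] generate.incl[of \<sigma>2 "{\<sigma>2}"] by auto
  ultimately show ?thesis
    using \<chi>(1,2) \<phi>1(1,3) \<phi>2(1,3) by blast
qed

lemma characters_for_cyclic:
  assumes g: "g \<in> carrier G"
    and \<sigma>: "\<sigma>1 \<in> generate G {g}" "\<sigma>2 \<in> generate G {g}" "\<sigma>1 \<noteq> \<one>" "\<sigma>2 \<noteq> \<one>"
    and \<tau>: "\<tau> \<in> generate G {g}" "\<tau> \<otimes> \<tau> \<noteq> \<one>"
  shows "\<exists>\<phi> \<chi>. character G \<phi> \<and> character G \<chi> \<and>
           \<chi> \<tau> \<noteq> 1 \<and>
           \<phi> \<sigma>1 \<noteq> 1 \<and> \<phi> \<sigma>2 \<noteq> 1 \<and>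
           \<phi> \<sigma>1 * \<chi> \<sigma>1 \<noteq> 1 \<and> \<phi> \<sigma>2 * \<chi> \<sigma>2 \<noteq> 1"
proof -
  have carrier: "\<sigma>1 \<in> carrier G" "\<sigma>2 \<in> carrier G" "\<tau> \<in> carrier G"
    using \<sigma>(1,2) \<tau>(1) generate_incl[of "{g}"] g by auto
  obtain \<psi> where \<psi>: "character G \<psi>" "\<forall>x\<in>generate G {g}. \<psi> x = 1 \<longrightarrow> x = \<one>"
    using faithful_character_on_cyclic[OF g] by blast
  define \<phi> where "\<phi> x = inverse (\<psi> x)" for x
  define \<chi> where "\<chi> x = \<psi> x * \<psi> x" for x
  have "character G \<phi>" "character G \<chi>"
    using \<psi>(1) by (simp_all add: \<phi>_def[abs_def] \<chi>_def[abs_def] character_inverse character_times)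
  moreover have "\<psi> \<sigma>1 \<noteq> 1" "\<psi> \<sigma>2 \<noteq> 1"
    using \<psi>(2) \<sigma> by auto
  moreover from this have "\<phi> \<sigma>1 \<noteq> 1" "\<phi> \<sigma>2 \<noteq> 1"
    by (simp_all add: \<phi>_def)
  moreover have "\<psi> \<sigma>1 \<noteq> 0" "\<psi> \<sigma>2 \<noteq> 0"
    using character_nonzero[OF \<psi>(1)] carrier by auto
  then have "\<phi> \<sigma>1 * \<chi> \<sigma>1 = \<psi> \<sigma>1" "\<phi> \<sigma>2 * \<chi> \<sigma>2 = \<psi> \<sigma>2"
    by (simp_all add: \<phi>_def \<chi>_def flip: mult.assoc)
  moreover have "\<tau> \<otimes> \<tau> \<in> generate G {g}"
    using \<tau>(1) g by (simp add: generate.eng)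
  then have "\<chi> \<tau> \<noteq> 1"
    using \<psi>(2) \<tau>(2) character_mult[OF \<psi>(1)] carrier(3) by (auto simp: \<chi>_def)
  ultimately show ?thesis
    by (intro exI[of _ \<phi>] exI[of _ \<chi>]) simp
qed

end

context group
begin

lemma group_rank_generate_le_card:
  assumes "finite S" and "S \<subseteq> carrier G"
  shows "group_rank G (generate G S) \<le> card S"
  unfolding group_rank_def
proof (rule Least_le)
  show "\<exists>T. T \<subseteq> generate G S \<and> finite T \<and> card T = card S \<and> generate G T = generate G S"
    using assms generate.incl[of _ S] by (intro exI[of _ S]) auto
qed

lemma group_rank_generate_pair_le_1:
  assumes b: "b \<in> carrier G" and a: "a \<in> generate G {b}"
  shows "group_rank G (generate G {a, b}) \<le> 1"
proof -
  have "generate G {a, b} \<subseteq> generate G {b}"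
    using a generate.incl[of b "{b}"] generate_is_subgroup[of "{b}"] b
    by (intro generate_subgroup_incl) auto
  moreover have "generate G {b} \<subseteq> generate G {a, b}"
    by (rule mono_generate) blast
  ultimately show ?thesis
    using group_rank_generate_le_card[of "{b}"] b by simp
qed

lemma group_rank_eq_2_imp_not_mem_generate:
  assumes "a \<in> carrier G" and "b \<in> carrier G" and "group_rank G (generate G {a, b}) = 2"
  shows "a \<notin> generate G {b}" and "b \<notin> generate G {a}"
  using group_rank_generate_pair_le_1[of b a] group_rank_generate_pair_le_1[of a b] assms
  by (auto simp: insert_commute)

lemma group_rank_eq_1_imp_cyclic:
  assumes "finite S" and S: "S \<subseteq> carrier G" and "group_rank G (generate G S) = 1"
  shows "\<exists>g\<in>carrier G. generate G S = generate G {g}"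
proof -
  let ?P = "\<lambda>n. \<exists>T. T \<subseteq> generate G S \<and> finite T \<and> card T = n \<and> generate G T = generate G S"
  have "?P (card S)"
    using assms generate.incl[of _ S] by (intro exI[of _ S]) auto
  then have "?P (group_rank G (generate G S))"
    unfolding group_rank_def by (rule LeastI)
  then obtain T where T: "T \<subseteq> generate G S" "card T = 1" "generate G T = generate G S"
    using assms(3) by auto
  then obtain g where "T = {g}"
    by (meson card_1_singletonE)
  moreover have "generate G S \<subseteq> carrier G"
    using S by (rule generate_incl)
  ultimately show ?thesis
    using T by auto
qed

end

theorem lemma4p13:
  fixes G (structure) and \<sigma>1 \<sigma>2 \<tau> :: 'a
  assumes "comm_group G" and "finite (carrier G)"
    and "\<sigma>1 \<in> carrier G" and "\<sigma>2 \<in> carrier G" and "\<tau> \<in> carrier G"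
    and "\<sigma>1 \<noteq> \<one>" and "\<sigma>2 \<noteq> \<one>" and "\<tau> \<noteq> \<one>"
    and "group.ord G \<tau> > 2"
    and "\<tau> \<in> generate G {\<sigma>1, \<sigma>2}"
  shows "(group_rank G (generate G {\<sigma>1, \<sigma>2}) = 2 \<longrightarrow>
           (\<exists>\<phi>1 \<phi>2 \<chi>. character G \<phi>1 \<and> character G \<phi>2 \<and> character G \<chi> \<and>
              \<chi> \<tau> \<noteq> 1 \<and>
              \<phi>1 \<sigma>1 \<noteq> 1 \<and> \<phi>2 \<sigma>2 \<noteq> 1 \<and> \<phi>1 \<sigma>2 = 1 \<and> \<phi>2 \<sigma>1 = 1 \<and>
              \<phi>1 \<sigma>1 * \<chi> \<sigma>1 \<noteq> 1 \<and> \<phi>2 \<sigma>2 * cnj (\<chi> \<sigma>2) \<noteq> 1))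
       \<and> (group_rank G (generate G {\<sigma>1, \<sigma>2}) = 1 \<longrightarrow>
           (\<exists>\<phi> \<chi>. character G \<phi> \<and> character G \<chi> \<and>
              \<chi> \<tau> \<noteq> 1 \<and>
              \<phi> \<sigma>1 \<noteq> 1 \<and> \<phi> \<sigma>2 \<noteq> 1 \<and>
              \<phi> \<sigma>1 * \<chi> \<sigma>1 \<noteq> 1 \<and> \<phi> \<sigma>2 * \<chi> \<sigma>2 \<noteq> 1))"
proof -
  interpret finite_comm_group G
    using assms(1,2) by (simp add: finite_comm_group_def finite_comm_group_axioms_def)
  have \<tau>\<tau>: "\<tau> \<otimes> \<tau> \<noteq> \<one>"
    using square_ne_one_if_ord_gt_2 assms(5,9) by blast
  show ?thesis
  proof (intro conjI impI)
    assume "group_rank G (generate G {\<sigma>1, \<sigma>2}) = 2"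
    note independent = group_rank_eq_2_imp_not_mem_generate[OF assms(3,4) this]
    show "\<exists>\<phi>1 \<phi>2 \<chi>. character G \<phi>1 \<and> character G \<phi>2 \<and> character G \<chi> \<and> \<chi> \<tau> \<noteq> 1 \<and>
        \<phi>1 \<sigma>1 \<noteq> 1 \<and> \<phi>2 \<sigma>2 \<noteq> 1 \<and> \<phi>1 \<sigma>2 = 1 \<and> \<phi>2 \<sigma>1 = 1 \<and>
        \<phi>1 \<sigma>1 * \<chi> \<sigma>1 \<noteq> 1 \<and> \<phi>2 \<sigma>2 * cnj (\<chi> \<sigma>2) \<noteq> 1"
      using characters_for_independent_pair[OF assms(3,4,10) \<tau>\<tau> independent] .
  next
    assume "group_rank G (generate G {\<sigma>1, \<sigma>2}) = 1"
    then obtain g where g: "g \<in> carrier G" "generate G {\<sigma>1, \<sigma>2} = generate G {g}"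
      using group_rank_eq_1_imp_cyclic[of "{\<sigma>1, \<sigma>2}"] assms(3,4) by auto
    moreover have "\<sigma>1 \<in> generate G {\<sigma>1, \<sigma>2}" "\<sigma>2 \<in> generate G {\<sigma>1, \<sigma>2}"
      by (simp_all add: generate.incl)
    ultimately show "\<exists>\<phi> \<chi>. character G \<phi> \<and> character G \<chi> \<and> \<chi> \<tau> \<noteq> 1 \<and>
        \<phi> \<sigma>1 \<noteq> 1 \<and> \<phi> \<sigma>2 \<noteq> 1 \<and> \<phi> \<sigma>1 * \<chi> \<sigma>1 \<noteq> 1 \<and> \<phi> \<sigma>2 * \<chi> \<sigma>2 \<noteq> 1"
      using characters_for_cyclic[OF g(1)] assms(6,7,10) \<tau>\<tau> by simp
  qed
qed

end
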